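(* Let $L_1,\dots,L_n\subset\mathbb{C}^2$ be $n\ge3$ distinct complex lines through the origin and let $a_1,\dots,a_n\in\mathbb{C}\setminus\{0\}$. The set of all standard connections with poles along $L_1,\dots,L_n$ and residue traces $\operatorname{tr}A_i=a_i$ is a complex affine space of dimension $n-3$.
   Context: With $\ell_i$ defining linear forms of $L_i$, a standard connection is a connection on $T\mathbb{C}^2$ (away from the lines) of the form $\nabla=d-\sum_iA_i\frac{d\ell_i}{\ell_i}$ in the frame $\partial_z,\partial_w$, where the $A_i$ are non-zero constant complex $2\times2$ matrices with $\ker A_i=L_i$ for all $i$ and $\sum_iA_i=c\cdot\mathrm{Id}$ for some $c\in\mathbb{C}$. Such a connection is determined by the tuple $(A_1,\dots,A_n)$. *)

theory Defs
  imports "HOL-Analysis.Analysis"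
begin

definition complex_line :: "(complex^2) set \<Rightarrow> bool" where
  "complex_line L \<longleftrightarrow> (\<exists>v. v \<noteq> 0 \<and> L = {c *s v | c. True})"

definition cscaleM :: "complex \<Rightarrow> complex^2^2 \<Rightarrow> complex^2^2" where
  "cscaleM t M = (\<chi> r s. t * M $ r $ s)"

text \<open>Standard connection with poles along the lines L i, given by residue tuple A:
  each A i is nonzero with kernel L i, and the sum of residues is a scalar matrix.\<close>
definition standard_connection :: "('n::finite \<Rightarrow> (complex^2) set) \<Rightarrow> ('n \<Rightarrow> complex^2^2) \<Rightarrow> bool" where
  "standard_connection L A \<longleftrightarrow>
     (\<forall>i. A i \<noteq> 0 \<and> {v. A i *v v = 0} = L i) \<and> (\<exists>c. (\<Sum>i\<in>UNIV. A i) = mat c)"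

definition complex_affine_space_dim :: "('n \<Rightarrow> complex^2^2) set \<Rightarrow> nat \<Rightarrow> bool" where
  "complex_affine_space_dim S m \<longleftrightarrow>
     (\<exists>P B. (\<forall>t. (\<forall>i. (\<Sum>k<m. cscaleM (t k) (B k i)) = 0) \<longrightarrow> (\<forall>k<m. t k = 0)) \<and>
            S = {(\<lambda>i. P i + (\<Sum>k<m. cscaleM (t k) (B k i))) | t. True})"

end

theory Submission
  imports Defs
begin

text \<open>For a line \<open>L = \<complex> v\<close>, the matrices with kernel \<open>L\<close> and trace \<open>a \<noteq> 0\<close> are exactly
  \<open>a W + s N(v)\<close>, \<open>s \<in> \<complex>\<close>, where \<open>W\<close> is any fixed matrix with \<open>W v = 0\<close>, \<open>tr W = 1\<close>, and
  \<open>N(v)\<close> is the traceless rank-one matrix killing \<open>v\<close>. Since \<open>tr (\<Sum> A\<^sub>i) = \<Sum> a\<^sub>i\<close> is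
  prescribed, the condition that \<open>\<Sum> A\<^sub>i\<close> be scalar says that \<open>\<Sum> s\<^sub>i N(v\<^sub>i)\<close> equals a fixed
  traceless matrix. For three pairwise independent \<open>v\<^sub>i\<close> the \<open>N(v\<^sub>i)\<close> form a basis of the
  three-dimensional space of traceless matrices, so three of the \<open>s\<^sub>i\<close> serve as pivots and the
  other \<open>n - 3\<close> are free parameters.\<close>

lemma vec2_eq_iff: "(x::'a^2) = y \<longleftrightarrow> x$1 = y$1 \<and> x$2 = y$2"
  by (simp add: vec_eq_iff forall_2)

lemma mat2_eq_iff:
  "(A::'a^2^2) = B \<longleftrightarrow> A$1$1 = B$1$1 \<and> A$1$2 = B$1$2 \<and> A$2$1 = B$2$1 \<and> A$2$2 = B$2$2"
  by (simp add: vec_eq_iff forall_2)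

lemma matrix_vector_mult_2_eq_0_iff:
  "(A::'a::semiring_1^2^2) *v x = 0 \<longleftrightarrow> (\<forall>r. A$r$1 * x$1 + A$r$2 * x$2 = 0)"
  by (simp add: vec_eq_iff matrix_vector_mult_def sum_2)

lemma trace_2: "trace (A::'a::semiring_1^2^2) = A$1$1 + A$2$2"
  by (simp add: trace_def sum_2)

lemma cscaleM_nth [simp]: "cscaleM t M $ r $ s = t * M$r$s"
  by (simp add: cscaleM_def)

lemma trace_sum: "trace (\<Sum>i\<in>A. M i) = (\<Sum>i\<in>A. trace (M i :: 'a::comm_semiring_1^'n^'n))"
  by (induction A rule: infinite_finite_induct) (simp_all add: trace_add trace_0[unfolded mat_0])

lemma trace_mat_2: "trace (mat c :: 'a::semiring_1^2^2) = 2 * c"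
  by (simp add: trace_2 mat_def mult_2)

interpretation cscaleM: module cscaleM
  by standard (simp_all add: vec_eq_iff algebra_simps)

lemma trace_cscaleM: "trace (cscaleM t M) = t * trace M"
  by (simp add: trace_2 algebra_simps)

lemma cscaleM_eq_0_iff: "cscaleM t M = 0 \<longleftrightarrow> t = 0 \<or> M = 0"
  by (auto simp: vec_eq_iff)

lemma cscaleM_mult_vec: "cscaleM t M *v v = t *s (M *v v)"
  by (simp add: vec_eq_iff matrix_vector_mult_def sum_distrib_left algebra_simps)

context module
begin

lemma sum_scale_add_lincomb:
  "(\<Sum>i\<in>UNIV. scale (x i + (\<Sum>k<m. t k * z k i)) (g i)) =
    (\<Sum>i\<in>UNIV. scale (x i) (g i)) + (\<Sum>k<m. scale (t k) (\<Sum>i\<in>UNIV. scale (z k i) (g i)))"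
  by (simp add: scale_left_distrib scale_sum_left scale_sum_right sum.distrib sum.swap[of _ UNIV])

lemma sum_scale_diff:
  "(\<Sum>i\<in>A. scale (x i - y i) (g i)) = (\<Sum>i\<in>A. scale (x i) (g i)) - (\<Sum>i\<in>A. scale (y i) (g i))"
  by (simp add: scale_left_diff_distrib sum_subtractf)

text \<open>Gaussian elimination with pivot set \<open>I\<close>: the coefficients outside \<open>I\<close> are free
  parameters, those in \<open>I\<close> are then determined.\<close>
lemma solutions_free_parametrization:
  fixes g :: "'n::finite \<Rightarrow> 'b" and I :: "'n set" and s0 :: "'n \<Rightarrow> 'a"
  assumes reduce: "\<And>s. \<exists>c. (\<forall>j. j \<notin> I \<longrightarrow> c j = 0) \<and>
      (\<Sum>i\<in>UNIV. scale (c i) (g i)) = (\<Sum>i\<in>UNIV. scale (s i) (g i))"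
    and injective: "\<And>c. \<forall>j. j \<notin> I \<longrightarrow> c j = 0 \<Longrightarrow>
      (\<Sum>i\<in>UNIV. scale (c i) (g i)) = 0 \<Longrightarrow> \<forall>j. c j = 0"
  obtains b h where
    "\<And>k k0. k < card (- I) \<Longrightarrow> k0 < card (- I) \<Longrightarrow> b k (h k0) = (if k = k0 then 1 else 0)"
    "{s. (\<Sum>i\<in>UNIV. scale (s i) (g i)) = (\<Sum>i\<in>UNIV. scale (s0 i) (g i))} =
      {(\<lambda>i. s0 i + (\<Sum>k<card (- I). t k * b k i)) | t. True}"
proof -
  define m where "m = card (- I)"
  define \<Phi> where "\<Phi> s = (\<Sum>i\<in>UNIV. scale (s i) (g i))" for s
  obtain h where h: "bij_betw h {..<m} (- I)"
    using ex_bij_betw_nat_finite[of "- I"] by (auto simp: m_def atLeast0LessThan)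
  have h_notin: "h k \<notin> I" if "k < m" for k
    using h that by (auto simp: bij_betw_def)
  have h_eq_iff: "h k = h k0 \<longleftrightarrow> k = k0" if "k < m" "k0 < m" for k k0
    using h that by (auto simp: bij_betw_def inj_on_def)
  define e :: "'n \<Rightarrow> 'n \<Rightarrow> 'a" where "e j i = (if i = j then 1 else 0)" for j i
  obtain c where c: "\<And>j j'. j' \<notin> I \<Longrightarrow> c j j' = 0" "\<And>j. \<Phi> (c j) = \<Phi> (e j)"
    using reduce[of "e _"] unfolding \<Phi>_def by metis
  define b where "b k i = e (h k) i - c (h k) i" for k i
  have \<Phi>_b: "\<Phi> (b k) = 0" for k
    using c(2) by (simp add: \<Phi>_def b_def sum_scale_diff)
  have b_at_h: "b k (h k0) = (if k = k0 then 1 else 0)" if "k < m" "k0 < m" for k k0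
    using c(1)[OF h_notin[OF that(2)]] h_eq_iff[OF that] by (auto simp: b_def e_def)
  have "s = (\<lambda>i. s0 i + (\<Sum>k<m. t k * b k i))"
    if "\<Phi> s = \<Phi> s0" and t: "t = (\<lambda>k. s (h k) - s0 (h k))" for s t
  proof -
    define d where "d i = s i - (s0 i + (\<Sum>k<m. t k * b k i))" for i
    have "\<Phi> d = 0"
      using that by (simp add: d_def \<Phi>_def sum_scale_diff sum_scale_add_lincomb \<Phi>_b[unfolded \<Phi>_def])
    moreover have "d j = 0" if "j \<notin> I" for j
    proof -
      obtain k0 where "k0 < m" "j = h k0"
        using h \<open>j \<notin> I\<close> by (auto simp: bij_betw_def)
      then show ?thesis
        by (simp add: d_def b_at_h t if_distrib[of "\<lambda>x. _ * x"] cong: if_cong)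
    qed
    ultimately have "d i = 0" for i
      using injective unfolding \<Phi>_def by blast
    then show ?thesis
      by (auto simp: d_def fun_eq_iff)
  qed
  moreover have "\<Phi> (\<lambda>i. s0 i + (\<Sum>k<m. t k * b k i)) = \<Phi> s0" for t
    using \<Phi>_b by (simp add: \<Phi>_def sum_scale_add_lincomb)
  ultimately have "{s. \<Phi> s = \<Phi> s0} = {(\<lambda>i. s0 i + (\<Sum>k<m. t k * b k i)) | t. True}"
    by blast
  then show ?thesis
    using that b_at_h unfolding \<Phi>_def m_def by blast
qed

end

definition det2 :: "'a::comm_ring_1^2 \<Rightarrow> 'a^2 \<Rightarrow> 'a" where
  "det2 u w = u$1 * w$2 - u$2 * w$1"

lemma det2_self [simp]: "det2 v v = 0"
  by (simp add: det2_def mult.commute)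

lemma det2_eq_0_imp_multiple:
  fixes v x :: "'a::field^2"
  assumes "v \<noteq> 0" "det2 v x = 0"
  shows "\<exists>c. x = c *s v"
proof (cases "v$1 = 0")
  case True
  then have "v$2 \<noteq> 0" "x$1 = 0"
    using assms by (auto simp: vec2_eq_iff det2_def)
  then show ?thesis
    by (intro exI[of _ "x$2 / v$2"]) (simp add: vec2_eq_iff True)
next
  case False
  then have "x$2 = x$1 / v$1 * v$2"
    using assms(2) by (simp add: det2_def field_simps)
  then show ?thesis
    by (intro exI[of _ "x$1 / v$1"]) (simp add: vec2_eq_iff False)
qed

lemma det2_ne_0_if_lines_neq:
  fixes v w :: "'a::field^2"
  assumes "v \<noteq> 0" "w \<noteq> 0" "{c *s v | c. True} \<noteq> {c *s w | c. True}"
  shows "det2 v w \<noteq> 0"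
proof
  assume "det2 v w = 0"
  then obtain d where d: "w = d *s v"
    using det2_eq_0_imp_multiple assms(1) by blast
  with assms(2) have "d \<noteq> 0" by auto
  have "c *s v = (c / d) *s w" "c *s w = (c * d) *s v" for c
    using \<open>d \<noteq> 0\<close> by (simp_all add: d)
  then have "{c *s v | c. True} = {c *s w | c. True}"
    by blast
  with assms(3) show False ..
qed

definition nil_mat :: "'a::comm_ring_1^2 \<Rightarrow> 'a^2^2" where
  "nil_mat v = (\<chi> r s. v$r * (if s = 1 then v$2 else - v$1))"

lemma nil_mat_nth [simp]:
  "nil_mat v $1$1 = v$1 * v$2" "nil_mat v $1$2 = - (v$1 * v$1)"
  "nil_mat v $2$1 = v$2 * v$2" "nil_mat v $2$2 = - (v$2 * v$1)"
  by (simp_all add: nil_mat_def)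

lemma nil_mat_mult_self [simp]: "nil_mat v *v v = 0"
  by (simp add: matrix_vector_mult_2_eq_0_iff forall_2 algebra_simps)

lemma trace_nil_mat [simp]: "trace (nil_mat v) = 0"
  by (simp add: trace_2 mult.commute)

lemma nil_mat_eq_0_iff [simp]: "nil_mat (v::'a::idom^2) = 0 \<longleftrightarrow> v = 0"
  by (auto simp: mat2_eq_iff vec2_eq_iff)

lemma traceless_annihilator_eq_nil_mat:
  fixes v :: "complex^2" and B :: "complex^2^2"
  assumes "v \<noteq> 0" "B *v v = 0" "trace B = 0"
  shows "\<exists>s. B = cscaleM s (nil_mat v)"
proof -
  have row: "B$r$1 * v$1 + B$r$2 * v$2 = 0" for r
    using assms(2) by (simp add: matrix_vector_mult_2_eq_0_iff)
  have tr: "B$2$2 = - B$1$1"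
    using assms(3) by (simp add: trace_2 eq_neg_iff_add_eq_0 add.commute)
  show ?thesis
  proof (cases "v$1 = 0")
    case True
    then have "v$2 \<noteq> 0" using assms(1) by (simp add: vec2_eq_iff)
    then have "B$1$2 = 0" "B$2$2 = 0" using row[of 1] row[of 2] True by simp_all
    then show ?thesis using True tr \<open>v$2 \<noteq> 0\<close>
      by (intro exI[of _ "B$2$1 / (v$2 * v$2)"]) (simp add: mat2_eq_iff)
  next
    case False
    have col1: "B$r$1 = - B$r$2 * v$2 / v$1" for r
      using row[of r] False by (simp add: field_simps eq_neg_iff_add_eq_0)
    have "B$2$1 = B$1$1 * v$2 / v$1"
      using col1[of 2] tr by simp
    then show ?thesis using False
      by (intro exI[of _ "- B$1$2 / (v$1 * v$1)"]) (simp add: mat2_eq_iff col1[of 1] tr field_simps)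
  qed
qed

lemma annihilator_with_trace_iff:
  fixes v :: "complex^2" and A W :: "complex^2^2"
  assumes "v \<noteq> 0" "W *v v = 0" "trace W = 1"
  shows "A *v v = 0 \<and> trace A = a \<longleftrightarrow> (\<exists>s. A = cscaleM a W + cscaleM s (nil_mat v))"
proof
  assume A: "A *v v = 0 \<and> trace A = a"
  have "(A - cscaleM a W) *v v = 0" "trace (A - cscaleM a W) = 0"
    using A assms(2,3) by (simp_all add: matrix_vector_mult_diff_rdistrib trace_sub trace_cscaleM
        cscaleM_mult_vec)
  then obtain s where "A - cscaleM a W = cscaleM s (nil_mat v)"
    using traceless_annihilator_eq_nil_mat assms(1) by blast
  then show "\<exists>s. A = cscaleM a W + cscaleM s (nil_mat v)"
    by (metis diff_add_cancel add.commute)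
next
  assume "\<exists>s. A = cscaleM a W + cscaleM s (nil_mat v)"
  then obtain s where A: "A = cscaleM a W + cscaleM s (nil_mat v)" ..
  show "A *v v = 0 \<and> trace A = a"
    using assms(2,3) by (simp add: A matrix_vector_mult_add_rdistrib trace_add trace_cscaleM
        cscaleM_mult_vec)
qed

lemma exists_annihilator_with_trace_one:
  fixes v :: "'a::field^2"
  assumes "v \<noteq> 0"
  shows "\<exists>W. W *v v = 0 \<and> trace W = 1"
proof (cases "v$1 = 0")
  case True
  then show ?thesis
    by (intro exI[of _ "vector [vector [1, 0], vector [0, 0]]"])
      (simp add: matrix_vector_mult_2_eq_0_iff forall_2 trace_2)
next
  case False
  then show ?thesis
    by (intro exI[of _ "vector [vector [0, 0], vector [- v$2 / v$1, 1]]"])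
      (simp add: matrix_vector_mult_2_eq_0_iff forall_2 trace_2)
qed

lemma annihilator_of_independent_eq_0:
  fixes A :: "'a::field^2^2"
  assumes "A *v v = 0" "A *v x = 0" "det2 v x \<noteq> 0"
  shows "A = 0"
proof -
  have v: "A$r$1 * v$1 + A$r$2 * v$2 = 0" and x: "A$r$1 * x$1 + A$r$2 * x$2 = 0" for r
    using assms(1,2) by (simp_all add: matrix_vector_mult_2_eq_0_iff)
  have "A$r$1 * det2 v x = x$2 * (A$r$1 * v$1 + A$r$2 * v$2) - v$2 * (A$r$1 * x$1 + A$r$2 * x$2)"
    and "A$r$2 * det2 v x = v$1 * (A$r$1 * x$1 + A$r$2 * x$2) - x$1 * (A$r$1 * v$1 + A$r$2 * v$2)"
    for r by (simp_all add: det2_def algebra_simps)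
  then have "A$r$1 * det2 v x = 0" "A$r$2 * det2 v x = 0" for r
    by (simp_all only: v x) simp_all
  then have "A$r$1 = 0" "A$r$2 = 0" for r
    using assms(3) by simp_all
  then show ?thesis
    by (simp add: mat2_eq_iff)
qed

text \<open>The trace hypothesis only serves to exclude \<open>A = 0\<close>.\<close>
lemma kernel_eq_line_iff:
  fixes v :: "'a::field^2" and A :: "'a^2^2"
  assumes "v \<noteq> 0" "trace A \<noteq> 0"
  shows "{x. A *v x = 0} = {c *s v | c. True} \<longleftrightarrow> A *v v = 0"
proof
  assume "{x. A *v x = 0} = {c *s v | c. True}"
  moreover have "v = 1 *s v" by simp
  ultimately show "A *v v = 0" by blast
next
  assume Av: "A *v v = 0"
  have "det2 v x = 0" if "A *v x = 0" for x
  proof (rule ccontr)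
    assume "det2 v x \<noteq> 0"
    then have "A = 0" using annihilator_of_independent_eq_0 Av that by blast
    then show False using assms(2) by (simp add: trace_2)
  qed
  then show "{x. A *v x = 0} = {c *s v | c. True}"
    using det2_eq_0_imp_multiple[OF assms(1)] Av by (auto simp: vector_scalar_commute)
qed

text \<open>Cramer's rule for the system with columns \<open>(p\<^sub>k q\<^sub>k, p\<^sub>k\<^sup>2, q\<^sub>k\<^sup>2)\<close>, whose
  determinant is, up to sign, the product of the three \<open>2 \<times> 2\<close> minors.\<close>
lemma quadratic_monomials_solvable:
  fixes p1 q1 p2 q2 p3 q3 y1 y2 y3 :: "'a::field"
  assumes "p1*q2 - q1*p2 \<noteq> 0" "p1*q3 - q1*p3 \<noteq> 0" "p2*q3 - q2*p3 \<noteq> 0"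
  shows "\<exists>x1 x2 x3. x1*(p1*q1) + x2*(p2*q2) + x3*(p3*q3) = y1 \<and>
    x1*(p1*p1) + x2*(p2*p2) + x3*(p3*p3) = y2 \<and> x1*(q1*q1) + x2*(q2*q2) + x3*(q3*q3) = y3"
proof -
  define D where "D = (p1*q2 - q1*p2) * (p1*q3 - q1*p3) * (p2*q3 - q2*p3)"
  define z1 where "z1 = (-(p2*q3 + q2*p3)*y1 + q2*q3*y2 + p2*p3*y3) * (p2*q3 - q2*p3)"
  define z2 where "z2 = ((p1*q3 + q1*p3)*y1 - q1*q3*y2 - p1*p3*y3) * (p1*q3 - q1*p3)"
  define z3 where "z3 = (-(p1*q2 + q1*p2)*y1 + q1*q2*y2 + p1*p2*y3) * (p1*q2 - q1*p2)"
  have "D \<noteq> 0"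
    using assms by (simp add: D_def)
  moreover have "z1*(p1*q1) + z2*(p2*q2) + z3*(p3*q3) = D*y1"
    "z1*(p1*p1) + z2*(p2*p2) + z3*(p3*p3) = D*y2"
    "z1*(q1*q1) + z2*(q2*q2) + z3*(q3*q3) = D*y3"
    unfolding z1_def z2_def z3_def D_def by algebra+
  moreover have "(z1/D)*a + (z2/D)*b + (z3/D)*c = (z1*a + z2*b + z3*c) / D" for a b c
    by (simp add: add_divide_distrib)
  ultimately show ?thesis
    by (intro exI[of _ "z1/D"] exI[of _ "z2/D"] exI[of _ "z3/D"]) simp
qed

lemma quadratic_monomials_unique:
  fixes p1 q1 p2 q2 p3 q3 x1 x2 x3 :: "'a::field"
  assumes "p1*q2 - q1*p2 \<noteq> 0" "p1*q3 - q1*p3 \<noteq> 0" "p2*q3 - q2*p3 \<noteq> 0"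
    and "x1*(p1*q1) + x2*(p2*q2) + x3*(p3*q3) = 0"
    and "x1*(p1*p1) + x2*(p2*p2) + x3*(p3*p3) = 0"
    and "x1*(q1*q1) + x2*(q2*q2) + x3*(q3*q3) = 0"
  shows "x1 = 0 \<and> x2 = 0 \<and> x3 = 0"
proof -
  define y1 where "y1 = x1*(p1*q1) + x2*(p2*q2) + x3*(p3*q3)"
  define y2 where "y2 = x1*(p1*p1) + x2*(p2*p2) + x3*(p3*p3)"
  define y3 where "y3 = x1*(q1*q1) + x2*(q2*q2) + x3*(q3*q3)"
  have "x1 * ((p1*q2 - q1*p2) * (p1*q3 - q1*p3)) = -(p2*q3 + q2*p3)*y1 + q2*q3*y2 + p2*p3*y3"
    "x2 * ((p1*q2 - q1*p2) * (p2*q3 - q2*p3)) = (p1*q3 + q1*p3)*y1 - q1*q3*y2 - p1*p3*y3"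
    "x3 * ((p1*q3 - q1*p3) * (p2*q3 - q2*p3)) = -(p1*q2 + q1*p2)*y1 + q1*q2*y2 + p1*p2*y3"
    unfolding y1_def y2_def y3_def by algebra+
  moreover have "y1 = 0" "y2 = 0" "y3 = 0"
    using assms(4-6) by (simp_all add: y1_def y2_def y3_def)
  ultimately show ?thesis
    using assms(1-3) by simp
qed

lemma sum_UNIV_supported_3:
  fixes f :: "'n::finite \<Rightarrow> 'a::comm_monoid_add"
  assumes "i1 \<noteq> i2" "i1 \<noteq> i3" "i2 \<noteq> i3" "\<And>j. j \<notin> {i1, i2, i3} \<Longrightarrow> f j = 0"
  shows "(\<Sum>i\<in>UNIV. f i) = f i1 + f i2 + f i3"
proof -
  have "(\<Sum>i\<in>UNIV. f i) = (\<Sum>i\<in>{i1, i2, i3}. f i)"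
    by (rule sum.mono_neutral_right) (use assms in auto)
  also have "\<dots> = f i1 + f i2 + f i3"
    using assms by (simp add: add.assoc)
  finally show ?thesis .
qed

lemma nil_mat_combination_3_nth:
  fixes u v w :: "complex^2" and x y z :: complex
  defines "M \<equiv> cscaleM x (nil_mat u) + cscaleM y (nil_mat v) + cscaleM z (nil_mat w)"
  shows "M$1$1 = x * (u$1 * u$2) + y * (v$1 * v$2) + z * (w$1 * w$2)"
    and "M$1$2 = - (x * (u$1 * u$1) + y * (v$1 * v$1) + z * (w$1 * w$1))"
    and "M$2$1 = x * (u$2 * u$2) + y * (v$2 * v$2) + z * (w$2 * w$2)"
    and "M$2$2 = - M$1$1"
  by (simp_all add: M_def algebra_simps)

lemma nil_mat_sum_onto_traceless:
  fixes v :: "'n::finite \<Rightarrow> complex^2"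
  assumes "det2 (v i1) (v i2) \<noteq> 0" "det2 (v i1) (v i3) \<noteq> 0" "det2 (v i2) (v i3) \<noteq> 0"
    and "trace Y = 0"
  shows "\<exists>c. (\<forall>j. j \<notin> {i1, i2, i3} \<longrightarrow> c j = 0) \<and>
    (\<Sum>i\<in>UNIV. cscaleM (c i) (nil_mat (v i))) = Y"
proof -
  obtain x1 x2 x3 where x:
    "x1 * (v i1$1 * v i1$2) + x2 * (v i2$1 * v i2$2) + x3 * (v i3$1 * v i3$2) = Y$1$1"
    "x1 * (v i1$1 * v i1$1) + x2 * (v i2$1 * v i2$1) + x3 * (v i3$1 * v i3$1) = - Y$1$2"
    "x1 * (v i1$2 * v i1$2) + x2 * (v i2$2 * v i2$2) + x3 * (v i3$2 * v i3$2) = Y$2$1"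
    using quadratic_monomials_solvable[OF assms(1-3)[unfolded det2_def]] by blast
  have "Y$2$2 = - Y$1$1"
    using assms(4) by (simp add: trace_2 eq_neg_iff_add_eq_0 add.commute)
  then have "cscaleM x1 (nil_mat (v i1)) + cscaleM x2 (nil_mat (v i2)) + cscaleM x3 (nil_mat (v i3)) = Y"
    by (simp only: mat2_eq_iff nil_mat_combination_3_nth x minus_minus simp_thms)
  moreover define c where
    "c j = (if j = i1 then x1 else if j = i2 then x2 else if j = i3 then x3 else 0)" for j
  moreover have "i1 \<noteq> i2" "i1 \<noteq> i3" "i2 \<noteq> i3"
    using assms(1-3) by auto
  ultimately have "(\<Sum>i\<in>UNIV. cscaleM (c i) (nil_mat (v i))) = Y"
    by (subst sum_UNIV_supported_3[of i1 i2 i3]) (auto simp: c_def)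
  then show ?thesis
    by (intro exI[of _ c]) (auto simp: c_def)
qed

lemma nil_mat_sum_injective_on_pivots:
  fixes v :: "'n::finite \<Rightarrow> complex^2"
  assumes "det2 (v i1) (v i2) \<noteq> 0" "det2 (v i1) (v i3) \<noteq> 0" "det2 (v i2) (v i3) \<noteq> 0"
    and "\<And>j. j \<notin> {i1, i2, i3} \<Longrightarrow> c j = 0" "(\<Sum>i\<in>UNIV. cscaleM (c i) (nil_mat (v i))) = 0"
  shows "c j = 0"
proof -
  let ?M = "cscaleM (c i1) (nil_mat (v i1)) + cscaleM (c i2) (nil_mat (v i2)) +
    cscaleM (c i3) (nil_mat (v i3))"
  have "i1 \<noteq> i2" "i1 \<noteq> i3" "i2 \<noteq> i3"
    using assms(1-3) by auto
  then have "(\<Sum>i\<in>UNIV. cscaleM (c i) (nil_mat (v i))) = ?M"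
    by (intro sum_UNIV_supported_3) (use assms(4) in auto)
  then have "?M$1$1 = 0" "?M$1$2 = 0" "?M$2$1 = 0"
    using assms(5) by simp_all
  then have "c i1 = 0 \<and> c i2 = 0 \<and> c i3 = 0"
    by (intro quadratic_monomials_unique[OF assms(1-3)[unfolded det2_def]])
      (simp_all only: nil_mat_combination_3_nth neg_equal_0_iff_equal)
  then show ?thesis
    using assms(4) by (cases "j \<in> {i1, i2, i3}") auto
qed

lemma ex_scalar_matrix_iff: "(\<exists>c. M = mat c) \<longleftrightarrow> M = mat (trace M / 2)"
  for M :: "'a::field_char_0^2^2"
proof
  assume "\<exists>c. M = mat c"
  then obtain c where "M = mat c" ..
  then show "M = mat (trace M / 2)"
    by (simp add: trace_mat_2)
qed blast

lemma standard_connections_with_traces: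
  fixes L :: "'n::finite \<Rightarrow> (complex^2) set"
  assumes "\<And>i. v i \<noteq> 0" "\<And>i. L i = {c *s v i | c. True}" "\<And>i. a i \<noteq> 0"
    and "\<And>i. W i *v v i = 0" "\<And>i. trace (W i) = 1"
  shows "{A. standard_connection L A \<and> (\<forall>i. trace (A i) = a i)} =
    {(\<lambda>i. cscaleM (a i) (W i) + cscaleM (s i) (nil_mat (v i))) | s.
      (\<Sum>i\<in>UNIV. cscaleM (s i) (nil_mat (v i))) =
        mat ((\<Sum>i\<in>UNIV. a i) / 2) - (\<Sum>i\<in>UNIV. cscaleM (a i) (W i))}"
proof -
  let ?A = "\<lambda>s i. cscaleM (a i) (W i) + cscaleM (s i) (nil_mat (v i))"
  have residue_iff: "(A i \<noteq> 0 \<and> {x. A i *v x = 0} = L i) \<and> trace (A i) = a i \<longleftrightarrow>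
      (\<exists>s. A i = ?A (\<lambda>_. s) i)" for A i
    using kernel_eq_line_iff[OF assms(1)] annihilator_with_trace_iff[OF assms(1,4,5)] assms(2,3)
    by (metis trace_0 mat_0)
  have "trace (\<Sum>i\<in>UNIV. ?A s i) = (\<Sum>i\<in>UNIV. a i)" for s
    using assms(5) by (simp add: trace_sum trace_add trace_cscaleM)
  then have scalar_iff: "(\<exists>c. (\<Sum>i\<in>UNIV. ?A s i) = mat c) \<longleftrightarrow>
      (\<Sum>i\<in>UNIV. cscaleM (s i) (nil_mat (v i))) =
        mat ((\<Sum>i\<in>UNIV. a i) / 2) - (\<Sum>i\<in>UNIV. cscaleM (a i) (W i))" for s
    by (simp add: ex_scalar_matrix_iff sum.distrib eq_diff_eq add.commute)
  have "standard_connection L A \<and> (\<forall>i. trace (A i) = a i) \<longleftrightarrow>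
      (\<exists>s. A = ?A s \<and> (\<exists>c. (\<Sum>i\<in>UNIV. ?A s i) = mat c))" for A
  proof -
    have "standard_connection L A \<and> (\<forall>i. trace (A i) = a i) \<longleftrightarrow>
        (\<forall>i. (A i \<noteq> 0 \<and> {x. A i *v x = 0} = L i) \<and> trace (A i) = a i) \<and>
        (\<exists>c. (\<Sum>i\<in>UNIV. A i) = mat c)"
      unfolding standard_connection_def by blast
    also have "\<dots> \<longleftrightarrow> (\<exists>s. A = ?A s \<and> (\<exists>c. (\<Sum>i\<in>UNIV. ?A s i) = mat c))"
      by (simp only: residue_iff choice_iff fun_eq_iff[symmetric]) blast
    finally show ?thesis .
  qed
  then show ?thesis
    unfolding scalar_iff by (simp only: set_eq_iff mem_Collect_eq simp_thms)
qed

lemma complex_affine_space_dim_lincomb: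
  fixes N :: "'n \<Rightarrow> complex^2^2"
  assumes "\<And>i. N i \<noteq> 0" "\<And>k k0. k < m \<Longrightarrow> k0 < m \<Longrightarrow> b k (h k0) = (if k = k0 then 1 else 0)"
  shows "complex_affine_space_dim {(\<lambda>i. P i + cscaleM (s0 i + (\<Sum>k<m. t k * b k i)) (N i)) | t. True} m"
proof -
  define B where "B k i = cscaleM (b k i) (N i)" for k i
  have lincomb: "(\<Sum>k<m. cscaleM (t k) (B k i)) = cscaleM (\<Sum>k<m. t k * b k i) (N i)" for t i
    by (simp add: B_def cscaleM.scale_sum_left)
  have "t k0 = 0" if "\<forall>i. (\<Sum>k<m. cscaleM (t k) (B k i)) = 0" "k0 < m" for t k0
  proof -
    have "(\<Sum>k<m. t k * b k (h k0)) = t k0"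
      using assms(2) \<open>k0 < m\<close> by (simp add: if_distrib[of "\<lambda>x. _ * x"] cong: if_cong)
    then show ?thesis
      using that(1) assms(1) by (simp add: lincomb cscaleM_eq_0_iff)
  qed
  moreover have "(\<lambda>i. P i + cscaleM (s0 i + (\<Sum>k<m. t k * b k i)) (N i)) =
      (\<lambda>i. (P i + cscaleM (s0 i) (N i)) + (\<Sum>k<m. cscaleM (t k) (B k i)))" for t
    by (simp add: fun_eq_iff lincomb cscaleM.scale_left_distrib add.assoc)
  ultimately show ?thesis
    unfolding complex_affine_space_dim_def
    by (intro exI[of _ "\<lambda>i. P i + cscaleM (s0 i) (N i)"] exI[of _ B]) auto
qed

lemma nil_mat_sum_solutions:
  fixes v :: "'n::finite \<Rightarrow> complex^2"
  assumes "CARD('n) \<ge> 3" "\<And>i j. i \<noteq> j \<Longrightarrow> det2 (v i) (v j) \<noteq> 0" "trace Y = 0"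
  obtains b h s0 where
    "\<And>k k0. k < CARD('n) - 3 \<Longrightarrow> k0 < CARD('n) - 3 \<Longrightarrow> b k (h k0) = (if k = k0 then 1 else 0)"
    "{s. (\<Sum>i\<in>UNIV. cscaleM (s i) (nil_mat (v i))) = Y} =
      {(\<lambda>i. s0 i + (\<Sum>k<CARD('n) - 3. t k * b k i)) | t. True}"
proof -
  obtain I :: "'n set" where "card I = 3"
    using obtain_subset_with_card_n[of 3 "UNIV :: 'n set"] assms(1) by auto
  then obtain i1 i2 i3 where I: "I = {i1, i2, i3}" "i1 \<noteq> i2" "i1 \<noteq> i3" "i2 \<noteq> i3"
    by (auto simp: card_3_iff)
  note pivots = assms(2)[OF I(2)] assms(2)[OF I(3)] assms(2)[OF I(4)]
  let ?\<Phi> = "\<lambda>s. \<Sum>i\<in>UNIV. cscaleM (s i) (nil_mat (v i))"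
  obtain s0 where s0: "?\<Phi> s0 = Y"
    using nil_mat_sum_onto_traceless[OF pivots assms(3)] by blast
  have "trace (?\<Phi> s) = 0" for s
    by (simp add: trace_sum trace_cscaleM)
  then have reduce: "\<exists>c. (\<forall>j. j \<notin> I \<longrightarrow> c j = 0) \<and> ?\<Phi> c = ?\<Phi> s" for s
    using nil_mat_sum_onto_traceless[OF pivots] unfolding I(1) by blast
  have injective: "\<forall>j. c j = 0" if "\<forall>j. j \<notin> I \<longrightarrow> c j = 0" "?\<Phi> c = 0" for c
    using nil_mat_sum_injective_on_pivots[OF pivots] that unfolding I(1) by blast
  have card_free: "card (- I) = CARD('n) - 3"
    using \<open>card I = 3\<close> by (simp add: Compl_eq_Diff_UNIV card_Diff_subset)
  obtain b h where b:
    "\<And>k k0. k < card (- I) \<Longrightarrow> k0 < card (- I) \<Longrightarrow> b k (h k0) = (if k = k0 then 1 else 0)"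
    and solutions: "{s. (\<Sum>i\<in>UNIV. cscaleM (s i) (nil_mat (v i))) = ?\<Phi> s0} =
      {(\<lambda>i. s0 i + (\<Sum>k<card (- I). t k * b k i)) | t. True}"
    using cscaleM.solutions_free_parametrization[of I _ s0, OF reduce injective] by blast
  show ?thesis
    by (rule that[of b h s0]) (use b solutions in \<open>simp_all only: card_free s0\<close>)
qed

theorem lemma10:
  fixes L :: "'n::finite \<Rightarrow> (complex^2) set" and a :: "'n \<Rightarrow> complex"
  assumes "CARD('n) \<ge> 3"
    and "\<And>i. complex_line (L i)"
    and "inj L"
    and "\<And>i. a i \<noteq> 0"
  shows "complex_affine_space_dim
           {A. standard_connection L A \<and> (\<forall>i. trace (A i) = a i)} (CARD('n) - 3)"
proof -
  obtain v where v: "\<And>i. v i \<noteq> 0" "\<And>i. L i = {c *s v i | c. True}"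
    using assms(2) unfolding complex_line_def by metis
  have det2_ne: "det2 (v i) (v j) \<noteq> 0" if "i \<noteq> j" for i j
    using det2_ne_0_if_lines_neq[OF v(1) v(1)] inj_eq[OF assms(3)] that v(2) by metis
  obtain W where W: "\<And>i. W i *v v i = 0" "\<And>i. trace (W i) = 1"
    using exists_annihilator_with_trace_one[OF v(1)] by metis
  define Y where "Y = mat ((\<Sum>i\<in>UNIV. a i) / 2) - (\<Sum>i\<in>UNIV. cscaleM (a i) (W i))"
  have "trace Y = 0"
    using W(2) by (simp add: Y_def trace_sub trace_sum trace_cscaleM trace_mat_2)
  obtain b h s0 where
    b: "\<And>k k0. k < CARD('n) - 3 \<Longrightarrow> k0 < CARD('n) - 3 \<Longrightarrow> b k (h k0) = (if k = k0 then 1 else 0)" and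
    solutions: "{s. (\<Sum>i\<in>UNIV. cscaleM (s i) (nil_mat (v i))) = Y} =
      {(\<lambda>i. s0 i + (\<Sum>k<CARD('n) - 3. t k * b k i)) | t. True}"
    using nil_mat_sum_solutions[where v = v, OF assms(1) det2_ne \<open>trace Y = 0\<close>] by blast
  have "{A. standard_connection L A \<and> (\<forall>i. trace (A i) = a i)} =
      {(\<lambda>i. cscaleM (a i) (W i) + cscaleM (s0 i + (\<Sum>k<CARD('n) - 3. t k * b k i)) (nil_mat (v i))) | t. True}"
    unfolding standard_connections_with_traces[OF v assms(4) W] Y_def[symmetric]
    by (simp only: setcompr_eq_image solutions image_image)
  then show ?thesis
    using complex_affine_space_dim_lincomb[where h = h, OF _ b] v(1) by simp
qed

end
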